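(* For every $i\geq 0$ we have $$T_i=(-1)^i\left(\omega_D-\frac{N_{i-1}}{c_{i+1}}\right)\quad\text{and}\quad N_i=\frac{\sqrt\Delta}{c_{i+1}}-\frac{N_{i-1}}{c_{i+1}^2}.$$
   Context: $D>1$ squarefree, $K=\mathbb{Q}(\sqrt D)$, $\Delta$ its discriminant, $\alpha'$ the Galois conjugate and $N(\alpha)=\alpha\alpha'$ the norm. $\omega_D=\sqrt D$ if $D\equiv 2,3\pmod 4$ and $\omega_D=\frac{1+\sqrt D}2$ if $D\equiv1\pmod4$; $\omega_D=[u_0;u_1,u_2,\dots]$ its continued fraction. Define $p_{-1}=1$, $q_{-1}=0$, $p_0=u_0$, $q_0=1$, $p_{i+1}=u_{i+1}p_i+p_{i-1}$, $q_{i+1}=u_{i+1}q_i+q_{i-1}$ (so $p_i/q_i=[u_0;u_1,\dots,u_i]$), and $\alpha_i=p_i-q_i\omega_D'\in\mathcal{O}_K$ for $i\geq-1$. Let $N_i=|N(\alpha_i)|$ (so $N_{-1}=1$). Define $T_i$ by $\alpha_{i-1}\alpha_i'=T_i+(-1)^{i+1}\omega_D$; explicitly $T_i=p_i(p_{i-1}-q_{i-1})-q_iq_{i-1}\frac{D-1}4$ if $D\equiv1\pmod4$ and $T_i=p_ip_{i-1}-Dq_iq_{i-1}$ if $D\equiv2,3\pmod4$. Finally $c_i=[u_i;u_{i+1},u_{i+2},\dots]$ (the complete quotients). *)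

theory Defs
  imports Complex_Main "HOL-Computational_Algebra.Squarefree"
begin

text \<open>K = Q(sqrt D) embedded in the reals with sqrt D > 0; the Galois conjugate
  sends sqrt D to -sqrt D.\<close>

definition omega :: "int \<Rightarrow> real" where
  "omega D = (if D mod 4 = 1 then (1 + sqrt (real_of_int D)) / 2 else sqrt (real_of_int D))"

definition omega_conj :: "int \<Rightarrow> real" where
  "omega_conj D = (if D mod 4 = 1 then (1 - sqrt (real_of_int D)) / 2 else - sqrt (real_of_int D))"

definition disc :: "int \<Rightarrow> int" where
  "disc D = (if D mod 4 = 1 then D else 4 * D)"

primrec cq :: "int \<Rightarrow> nat \<Rightarrow> real" where
  "cq D 0 = omega D"
| "cq D (Suc n) = 1 / (cq D n - of_int \<lfloor>cq D n\<rfloor>)"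

definition u :: "int \<Rightarrow> nat \<Rightarrow> int" where
  "u D n = \<lfloor>cq D n\<rfloor>"

text \<open>Shifted convergent numerators/denominators: pp D k = p_(k-1), qq D k = q_(k-1).\<close>
fun pp :: "int \<Rightarrow> nat \<Rightarrow> int" where
  "pp D 0 = 1"
| "pp D (Suc 0) = u D 0"
| "pp D (Suc (Suc n)) = u D (Suc n) * pp D (Suc n) + pp D n"

fun qq :: "int \<Rightarrow> nat \<Rightarrow> int" where
  "qq D 0 = 0"
| "qq D (Suc 0) = 1"
| "qq D (Suc (Suc n)) = u D (Suc n) * qq D (Suc n) + qq D n"

definition cf_p :: "int \<Rightarrow> int \<Rightarrow> int" where
  "cf_p D i = pp D (nat (i + 1))"

definition cf_q :: "int \<Rightarrow> int \<Rightarrow> int" where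
  "cf_q D i = qq D (nat (i + 1))"

definition alpha :: "int \<Rightarrow> int \<Rightarrow> real" where
  "alpha D i = of_int (cf_p D i) - of_int (cf_q D i) * omega_conj D"

definition alpha_conj :: "int \<Rightarrow> int \<Rightarrow> real" where
  "alpha_conj D i = of_int (cf_p D i) - of_int (cf_q D i) * omega D"

definition Nabs :: "int \<Rightarrow> int \<Rightarrow> real" where
  "Nabs D i = \<bar>alpha D i * alpha_conj D i\<bar>"

definition T :: "int \<Rightarrow> int \<Rightarrow> int" where
  "T D i = (if D mod 4 = 1
     then cf_p D i * (cf_p D (i - 1) - cf_q D (i - 1)) - cf_q D i * cf_q D (i - 1) * ((D - 1) div 4)
     else cf_p D i * cf_p D (i - 1) - D * cf_q D i * cf_q D (i - 1))"

end

theory Submission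
  imports Defs
begin

text \<open>The complete quotients satisfy \<open>c\<^sub>i\<^sub>+\<^sub>1 > 1\<close> because \<open>\<omega>\<^sub>D\<close> is irrational, and the
  conjugates \<open>\<alpha>\<^sub>i' = p\<^sub>i - q\<^sub>i \<omega>\<^sub>D\<close> obey \<open>\<alpha>'\<^sub>i\<^sub>-\<^sub>1 = -c\<^sub>i\<^sub>+\<^sub>1 \<alpha>'\<^sub>i\<close>, so they alternate in sign,
  while \<open>\<alpha>\<^sub>i > 0\<close>; this fixes the sign of \<open>N(\<alpha>\<^sub>i)\<close>. The determinant identity
  \<open>p\<^sub>i q\<^sub>i\<^sub>-\<^sub>1 - p\<^sub>i\<^sub>-\<^sub>1 q\<^sub>i = (-1)\<^sup>i\<^sup>+\<^sup>1\<close> gives both \<open>\<alpha>\<^sub>i\<^sub>-\<^sub>1 \<alpha>'\<^sub>i = T\<^sub>i - (-1)\<^sup>i \<omega>\<^sub>D\<close> and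
  \<open>\<alpha>'\<^sub>i\<^sub>-\<^sub>1 \<alpha>\<^sub>i = T\<^sub>i - (-1)\<^sup>i \<omega>\<^sub>D'\<close>. Dividing \<open>N\<^sub>i\<^sub>-\<^sub>1 = \<plusminus>\<alpha>\<^sub>i\<^sub>-\<^sub>1 \<alpha>'\<^sub>i\<^sub>-\<^sub>1\<close> by \<open>c\<^sub>i\<^sub>+\<^sub>1\<close> and using the
  recurrence turns these two identities into the two claimed formulas.\<close>

lemma sqrt_of_int_irrational:
  fixes D :: int
  assumes "D > 1" "squarefree D"
  shows "sqrt (real_of_int D) \<notin> \<rat>"
proof
  assume "sqrt (real_of_int D) \<in> \<rat>"
  then obtain a b :: int where b: "b > 0" "coprime a b" "sqrt (real_of_int D) = of_int a / of_int b"
    by (rule Rats_cases')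
  have "real_of_int D = (sqrt (real_of_int D))^2" using assms(1) by simp
  then have "real_of_int D = (of_int a / of_int b)^2" using b(3) by simp
  then have "real_of_int D * (of_int b)^2 = (of_int a)^2" using b(1)
    by (simp add: field_simps power2_eq_square)
  then have eq: "D * b^2 = a^2" by (metis of_int_eq_iff of_int_mult of_int_power)
  have "coprime (b^2) (a^2)" using b(2) by (simp add: coprime_commute)
  then have "b^2 dvd 1"
    using eq by (metis coprime_common_divisor dvd_refl dvd_triv_right)
  then have "b = 1" using b(1) by (simp add: power2_eq_1_iff)
  then have "a^2 dvd D" using eq by simp
  then have "is_unit a" by (rule squarefreeD[OF assms(2)])
  then have "\<bar>a\<bar> = 1" by simp
  then have "a^2 = 1" by (metis power2_abs power_one)
  then show False using eq \<open>b = 1\<close> assms(1) by simp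
qed

lemma omega_irrational:
  assumes "D > 1" "squarefree D"
  shows "omega D \<notin> \<rat>"
proof
  assume "omega D \<in> \<rat>"
  moreover have "sqrt (real_of_int D) = (if D mod 4 = 1 then 2 * omega D - 1 else omega D)"
    by (simp add: omega_def field_simps)
  ultimately have "sqrt (real_of_int D) \<in> \<rat>" by simp
  then show False using sqrt_of_int_irrational assms by blast
qed

lemma cq_irrational:
  assumes "D > 1" "squarefree D"
  shows "cq D n \<notin> \<rat>"
proof (induction n)
  case 0
  then show ?case using omega_irrational assms by simp
next
  case (Suc n)
  show ?case
  proof
    assume "cq D (Suc n) \<in> \<rat>"
    moreover have "cq D n = inverse (cq D (Suc n)) + of_int \<lfloor>cq D n\<rfloor>" by simp
    ultimately have "cq D n \<in> \<rat>" by (metis Rats_add Rats_inverse Rats_of_int)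
    with Suc show False by blast
  qed
qed

declare cq.simps(2) [simp del]

lemma cq_frac_bounds:
  assumes "D > 1" "squarefree D"
  shows "0 < cq D n - of_int \<lfloor>cq D n\<rfloor>" "cq D n - of_int \<lfloor>cq D n\<rfloor> < 1"
proof -
  have "cq D n \<noteq> of_int \<lfloor>cq D n\<rfloor>" by (metis Rats_of_int cq_irrational[OF assms])
  with of_int_floor_le[of "cq D n"] real_of_int_floor_add_one_gt[of "cq D n"]
  show "0 < cq D n - of_int \<lfloor>cq D n\<rfloor>" "cq D n - of_int \<lfloor>cq D n\<rfloor> < 1" by linarith+
qed

lemma cq_Suc_gt_1:
  assumes "D > 1" "squarefree D"
  shows "cq D (Suc n) > 1"
  using cq_frac_bounds[OF assms, of n] by (simp add: cq.simps(2) less_divide_eq_1)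

lemma u_Suc_ge_1:
  assumes "D > 1" "squarefree D"
  shows "u D (Suc n) \<ge> 1"
  using cq_Suc_gt_1[OF assms, of n] unfolding u_def by linarith

lemma qq_Suc_ge_1:
  assumes "D > 1" "squarefree D"
  shows "qq D (Suc n) \<ge> 1"
proof -
  have "qq D n \<ge> 0 \<and> qq D (Suc n) \<ge> 1"
  proof (induction n)
    case (Suc n)
    then have "1 * 1 \<le> u D (Suc n) * qq D (Suc n)"
      using u_Suc_ge_1[OF assms, of n] by (intro mult_mono) auto
    with Suc show ?case by simp
  qed simp
  then show ?thesis by blast
qed

lemma pp_qq_det: "pp D (Suc n) * qq D n - pp D n * qq D (Suc n) = - ((-1) ^ n)"
  by (induction n) (simp_all add: algebra_simps)

lemma cf_p_shift [simp]: "cf_p D (int n - 1) = pp D n" "cf_p D (int n) = pp D (Suc n)"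
  by (simp_all add: cf_p_def nat_add_distrib)

lemma cf_q_shift [simp]: "cf_q D (int n - 1) = qq D n" "cf_q D (int n) = qq D (Suc n)"
  by (simp_all add: cf_q_def nat_add_distrib)

lemma omega_minus_omega_conj: "D > 1 \<Longrightarrow> omega D - omega_conj D = sqrt (real_of_int (disc D))"
  by (simp add: omega_def omega_conj_def disc_def real_sqrt_mult field_simps)

lemma sqrt_disc_gt_1: "D > 1 \<Longrightarrow> sqrt (real_of_int (disc D)) > 1"
  by (simp add: disc_def)

lemma omega_plus_omega_conj: "omega D + omega_conj D = (if D mod 4 = 1 then 1 else 0)"
  by (simp add: omega_def omega_conj_def add_divide_distrib[symmetric])

lemma omega_times_omega_conj:
  "D \<ge> 0 \<Longrightarrow> omega D * omega_conj D
    = (if D mod 4 = 1 then - ((real_of_int D - 1) / 4) else - real_of_int D)"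
  by (simp add: omega_def omega_conj_def field_simps power2_eq_square[symmetric])

definition alpha_prev :: "int \<Rightarrow> nat \<Rightarrow> real" where
  "alpha_prev D n = of_int (pp D n) - of_int (qq D n) * omega_conj D"

definition alpha_conj_prev :: "int \<Rightarrow> nat \<Rightarrow> real" where
  "alpha_conj_prev D n = of_int (pp D n) - of_int (qq D n) * omega D"

lemma alpha_eq_alpha_prev: "alpha D (int n - 1) = alpha_prev D n"
  by (simp add: alpha_def alpha_prev_def)

lemma alpha_conj_eq_alpha_conj_prev: "alpha_conj D (int n - 1) = alpha_conj_prev D n"
  by (simp add: alpha_conj_def alpha_conj_prev_def)

lemma alpha_conj_prev_rec:
  assumes "D > 1" "squarefree D"
  shows "alpha_conj_prev D (Suc n) * cq D (Suc n) + alpha_conj_prev D n = 0"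
proof (induction n)
  case 0
  have "cq D 0 - of_int \<lfloor>cq D 0\<rfloor> > 0" by (rule cq_frac_bounds[OF assms])
  then show ?case by (simp add: alpha_conj_prev_def u_def cq.simps(2) field_simps)
next
  case (Suc n)
  define x where "x = cq D (Suc n) - of_int (u D (Suc n))"
  have "x > 0" using cq_frac_bounds[OF assms, of "Suc n"] by (simp add: x_def u_def)
  have "alpha_conj_prev D (Suc (Suc n))
      = of_int (u D (Suc n)) * alpha_conj_prev D (Suc n) + alpha_conj_prev D n"
    by (simp add: alpha_conj_prev_def algebra_simps)
  also have "\<dots> = - alpha_conj_prev D (Suc n) * x"
    using Suc.IH by (simp add: x_def algebra_simps eq_neg_iff_add_eq_0)
  finally show ?case using \<open>x > 0\<close> by (simp add: x_def u_def cq.simps(2))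
qed

lemma alpha_conj_prev_sign:
  assumes "D > 1" "squarefree D"
  shows "0 < (-1) ^ n * alpha_conj_prev D n \<and> \<bar>alpha_conj_prev D n\<bar> \<le> 1"
proof (induction n)
  case 0
  then show ?case by (simp add: alpha_conj_prev_def)
next
  case (Suc n)
  have c: "cq D (Suc n) > 1" by (rule cq_Suc_gt_1[OF assms])
  then have e: "alpha_conj_prev D (Suc n) = - alpha_conj_prev D n / cq D (Suc n)"
    using alpha_conj_prev_rec[OF assms, of n] by (simp add: field_simps)
  have "\<bar>alpha_conj_prev D n\<bar> / cq D (Suc n) \<le> 1"
    using Suc c by (simp add: divide_le_eq)
  with Suc c show ?case unfolding e by (simp add: abs_minus_commute)
qed

lemma alpha_prev_pos:
  assumes "D > 1" "squarefree D"
  shows "alpha_prev D n > 0"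
proof (cases n)
  case 0
  then show ?thesis by (simp add: alpha_prev_def)
next
  case (Suc m)
  have "alpha_prev D n = alpha_conj_prev D n + of_int (qq D n) * sqrt (real_of_int (disc D))"
    using omega_minus_omega_conj[OF assms(1)]
    by (simp add: alpha_prev_def alpha_conj_prev_def algebra_simps flip: right_diff_distrib)
  moreover have "1 * 1 < of_int (qq D n) * sqrt (real_of_int (disc D))"
    using qq_Suc_ge_1[OF assms, of m] sqrt_disc_gt_1[OF assms(1)] Suc
    by (intro mult_le_less_imp_less) auto
  moreover have "\<bar>alpha_conj_prev D n\<bar> \<le> 1" using alpha_conj_prev_sign[OF assms] by blast
  ultimately show ?thesis by linarith
qed

lemma Nabs_eq:
  assumes "D > 1" "squarefree D"
  shows "Nabs D (int n - 1) = (-1) ^ n * alpha_prev D n * alpha_conj_prev D n"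
proof -
  have "\<bar>alpha_conj_prev D n\<bar> = (-1) ^ n * alpha_conj_prev D n"
    using alpha_conj_prev_sign[OF assms, of n] by (cases "even n") auto
  then show ?thesis using alpha_prev_pos[OF assms, of n]
    by (simp add: Nabs_def alpha_eq_alpha_prev alpha_conj_eq_alpha_conj_prev abs_mult)
qed

lemma of_int_T:
  assumes "D \<ge> 0"
  shows "real_of_int (T D (int n)) = of_int (pp D (Suc n)) * of_int (pp D n)
    - of_int (pp D (Suc n)) * of_int (qq D n) * (omega D + omega_conj D)
    + of_int (qq D (Suc n)) * of_int (qq D n) * (omega D * omega_conj D)"
proof (cases "D mod 4 = 1")
  case True
  then obtain k where "D = 4 * k + 1" by (metis add.commute mult.commute mod_div_mult_eq)
  with assms show ?thesis
    by (simp add: T_def omega_plus_omega_conj omega_times_omega_conj algebra_simps)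
next
  case False
  with assms show ?thesis by (simp add: T_def omega_plus_omega_conj omega_times_omega_conj)
qed

lemma T_eq_alpha_prev_mult:
  assumes "D \<ge> 0"
  shows "real_of_int (T D (int n)) = alpha_prev D n * alpha_conj_prev D (Suc n) + (-1) ^ n * omega D"
    and "real_of_int (T D (int n))
      = alpha_conj_prev D n * alpha_prev D (Suc n) + (-1) ^ n * omega_conj D"
proof -
  have det: "real_of_int (pp D (Suc n)) * of_int (qq D n) - of_int (pp D n) * of_int (qq D (Suc n))
      = - ((-1) ^ n)"
    using arg_cong[OF pp_qq_det, of real_of_int D n] by simp
  have "alpha_prev D n * alpha_conj_prev D (Suc n)
      = real_of_int (T D (int n)) + omega D *
          (of_int (pp D (Suc n)) * of_int (qq D n) - of_int (pp D n) * of_int (qq D (Suc n)))"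
    by (simp add: of_int_T[OF assms] alpha_prev_def alpha_conj_prev_def algebra_simps)
  then show "real_of_int (T D (int n)) = alpha_prev D n * alpha_conj_prev D (Suc n) + (-1) ^ n * omega D"
    unfolding det by simp
  have "alpha_conj_prev D n * alpha_prev D (Suc n)
      = real_of_int (T D (int n)) + omega_conj D *
          (of_int (pp D (Suc n)) * of_int (qq D n) - of_int (pp D n) * of_int (qq D (Suc n)))"
    by (simp add: of_int_T[OF assms] alpha_prev_def alpha_conj_prev_def algebra_simps)
  then show "real_of_int (T D (int n))
      = alpha_conj_prev D n * alpha_prev D (Suc n) + (-1) ^ n * omega_conj D"
    unfolding det by simp
qed

lemma conjugate_product_identities:
  fixes a\<^sub>0 a\<^sub>0' a\<^sub>1 a\<^sub>1' c \<sigma> w w' t :: "'a::field"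
  assumes rec: "a\<^sub>0' = - c * a\<^sub>1'" and "c \<noteq> 0" and \<sigma>: "\<sigma> * \<sigma> = 1"
    and t\<^sub>0: "t = a\<^sub>0 * a\<^sub>1' + \<sigma> * w" and t\<^sub>1: "t = a\<^sub>0' * a\<^sub>1 + \<sigma> * w'"
  shows "t = \<sigma> * (w - \<sigma> * a\<^sub>0 * a\<^sub>0' / c)"
    and "- \<sigma> * a\<^sub>1 * a\<^sub>1' = (w - w') / c - \<sigma> * a\<^sub>0 * a\<^sub>0' / c\<^sup>2"
proof -
  have \<sigma>\<sigma>: "\<sigma> * (\<sigma> * x) = x" for x
    using \<sigma> by (simp flip: mult.assoc)
  have "\<sigma> * a\<^sub>0 * a\<^sub>0' / c = - \<sigma> * (a\<^sub>0 * a\<^sub>1')"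
    using \<open>c \<noteq> 0\<close> by (simp add: rec)
  then show t: "t = \<sigma> * (w - \<sigma> * a\<^sub>0 * a\<^sub>0' / c)"
    using t\<^sub>0 by (simp add: algebra_simps \<sigma>\<sigma>)
  have "c * (a\<^sub>1 * a\<^sub>1') = \<sigma> * w' - t"
    using t\<^sub>1 by (simp add: rec algebra_simps)
  moreover have "- \<sigma> * a\<^sub>1 * a\<^sub>1' = - \<sigma> * (c * (a\<^sub>1 * a\<^sub>1')) / c"
    using \<open>c \<noteq> 0\<close> by simp
  ultimately have "- \<sigma> * a\<^sub>1 * a\<^sub>1' = (\<sigma> * t - w') / c"
    by (simp add: right_diff_distrib \<sigma>\<sigma>)
  also have "\<dots> = (w - w') / c - \<sigma> * a\<^sub>0 * a\<^sub>0' / c\<^sup>2"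
    using \<open>c \<noteq> 0\<close> by (simp add: t \<sigma>\<sigma> field_simps power2_eq_square)
  finally show "- \<sigma> * a\<^sub>1 * a\<^sub>1' = (w - w') / c - \<sigma> * a\<^sub>0 * a\<^sub>0' / c\<^sup>2" .
qed

theorem lemma4:
  fixes D :: int and i :: nat
  assumes "D > 1" and "squarefree D"
  shows "real_of_int (T D (int i)) = (-1) ^ i * (omega D - Nabs D (int i - 1) / cq D (i + 1))
    \<and> Nabs D (int i) = sqrt (real_of_int (disc D)) / cq D (i + 1) - Nabs D (int i - 1) / (cq D (i + 1))^2"
proof -
  define \<sigma> :: real where "\<sigma> = (-1) ^ i"
  have "alpha_conj_prev D i = - cq D (Suc i) * alpha_conj_prev D (Suc i)"
    using alpha_conj_prev_rec[OF assms, of i]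
    by (simp add: eq_neg_iff_add_eq_0 algebra_simps)
  moreover have "cq D (Suc i) \<noteq> 0" using cq_Suc_gt_1[OF assms, of i] by simp
  moreover have "\<sigma> * \<sigma> = 1" by (simp add: \<sigma>_def flip: power_add mult_2)
  moreover have "real_of_int (T D (int i)) = alpha_prev D i * alpha_conj_prev D (Suc i) + \<sigma> * omega D"
    and "real_of_int (T D (int i))
      = alpha_conj_prev D i * alpha_prev D (Suc i) + \<sigma> * omega_conj D"
    using T_eq_alpha_prev_mult[of D i] assms(1) by (simp_all add: \<sigma>_def)
  ultimately have "real_of_int (T D (int i))
      = \<sigma> * (omega D - \<sigma> * alpha_prev D i * alpha_conj_prev D i / cq D (Suc i))"
    and "- \<sigma> * alpha_prev D (Suc i) * alpha_conj_prev D (Suc i)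
      = (omega D - omega_conj D) / cq D (Suc i)
        - \<sigma> * alpha_prev D i * alpha_conj_prev D i / (cq D (Suc i))\<^sup>2"
    by (rule conjugate_product_identities)+
  moreover have "Nabs D (int i - 1) = \<sigma> * alpha_prev D i * alpha_conj_prev D i"
    and "Nabs D (int i) = - \<sigma> * alpha_prev D (Suc i) * alpha_conj_prev D (Suc i)"
    using Nabs_eq[OF assms, of i] Nabs_eq[OF assms, of "Suc i"] by (simp_all add: \<sigma>_def)
  ultimately show ?thesis using omega_minus_omega_conj[OF assms(1)] by (simp add: \<sigma>_def)
qed

end
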